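(* Let $\mathcal{G}=(V,L)$ be a finite connected undirected graph with monitor set $M$ and non-monitor set $N=V\setminus M$, with measurement paths given by Controllable Arbitrary-path Probing (CAP). Let $S\subseteq N$ and $k\ge1$. Then $S$ is $k$-identifiable if and only if for every set $V'\subseteq N$ with $|V'|\le k-1$, each connected component of $\mathcal{G}-V'$ that contains a node of $S$ contains a monitor.
   Context: $\mathcal{G}-V'$ denotes the graph obtained by deleting the nodes of $V'$ and their incident links. Under CAP, the measurement paths $P$ are all walks in $\mathcal{G}$ (paths or cycles, repeated nodes/links allowed) starting and ending at monitors (possibly the same). A failure set is any $F\subseteq N$; a path fails iff it traverses a node of $F$. $P_F$ is the set of paths in $P$ traversing a node of $F$; $F_1,F_2$ distinguishable iff $P_{F_1}\ne P_{F_2}$. $S\subseteq N$ is $k$-identifiable if any two failure sets $F_1,F_2$ with $|F_1|,|F_2|\le k$ and $F_1\cap S\ne F_2\cap S$ are distinguishable. *)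

theory Defs
  imports Main
begin

definition undirected_graph :: "'a set \<Rightarrow> ('a \<Rightarrow> 'a \<Rightarrow> bool) \<Rightarrow> bool" where
  "undirected_graph V E \<longleftrightarrow> finite V \<and> (\<forall>u v. E u v \<longrightarrow> u \<in> V \<and> v \<in> V \<and> E v u \<and> u \<noteq> v)"

definition is_walk :: "'a set \<Rightarrow> ('a \<Rightarrow> 'a \<Rightarrow> bool) \<Rightarrow> 'a list \<Rightarrow> bool" where
  "is_walk V E p \<longleftrightarrow> p \<noteq> [] \<and> set p \<subseteq> V \<and> successively E p"

definition connected_graph :: "'a set \<Rightarrow> ('a \<Rightarrow> 'a \<Rightarrow> bool) \<Rightarrow> bool" where
  "connected_graph V E \<longleftrightarrow> V \<noteq> {} \<and>
     (\<forall>u\<in>V. \<forall>v\<in>V. \<exists>p. is_walk V E p \<and> hd p = u \<and> last p = v)"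

definition cap_paths :: "'a set \<Rightarrow> ('a \<Rightarrow> 'a \<Rightarrow> bool) \<Rightarrow> 'a set \<Rightarrow> 'a list set" where
  "cap_paths V E M = {p. is_walk V E p \<and> hd p \<in> M \<and> last p \<in> M}"

definition failed_paths :: "'a list set \<Rightarrow> 'a set \<Rightarrow> 'a list set" where
  "failed_paths P F = {p \<in> P. set p \<inter> F \<noteq> {}}"

definition k_identifiable ::
  "'a set \<Rightarrow> ('a \<Rightarrow> 'a \<Rightarrow> bool) \<Rightarrow> 'a set \<Rightarrow> 'a set \<Rightarrow> nat \<Rightarrow> bool" where
  "k_identifiable V E M S k \<longleftrightarrow>
     (\<forall>F1 F2. F1 \<subseteq> V - M \<and> F2 \<subseteq> V - M \<and> card F1 \<le> k \<and> card F2 \<le> k \<and> F1 \<inter> S \<noteq> F2 \<inter> S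
        \<longrightarrow> failed_paths (cap_paths V E M) F1 \<noteq> failed_paths (cap_paths V E M) F2)"

end

theory Submission
  imports Defs
begin

text \<open>If some failure set F of size at most k-1 cuts s off from all monitors, then every
  measurement path through s already meets F, so F and F \<union> {s} are indistinguishable.
  Conversely, let F1, F2 differ on s and put V' = F1 \<inter> F2, which has size at most k-1.
  A walk from s to a monitor avoiding V' meets F1 \<union> F2; going from the last such vertex x
  to the monitor and back gives a CAP path meeting F1 \<union> F2 only in x, and x lies in
  exactly one of F1, F2.\<close>

lemma is_walk_Diff_iff:
  "is_walk (V - A) E p \<longleftrightarrow> is_walk V E p \<and> set p \<inter> A = {}"
  unfolding is_walk_def by blast

lemma successively_rev_append:
  assumes sym: "\<And>u v. E u v \<Longrightarrow> E v u" and "successively E (x # zs)"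
  shows "successively E (rev zs @ x # zs)"
proof -
  have "successively (\<lambda>a b. E b a) (x # zs)"
    using assms(2) by (rule successively_mono) (auto intro: sym)
  then have "successively E (rev zs @ [x])"
    by (metis rev.simps(2) successively_rev)
  with assms(2) show ?thesis
    by (simp add: successively_append_iff)
qed

lemma failed_paths_insert_unreachable:
  assumes "\<not> (\<exists>p. is_walk (V - F) E p \<and> hd p = s \<and> last p \<in> M)"
  shows "failed_paths (cap_paths V E M) (insert s F) = failed_paths (cap_paths V E M) F"
proof (intro equalityI subsetI)
  fix p assume p: "p \<in> failed_paths (cap_paths V E M) (insert s F)"
  show "p \<in> failed_paths (cap_paths V E M) F"
  proof (rule ccontr)
    assume "p \<notin> failed_paths (cap_paths V E M) F"
    with p have avoid: "set p \<inter> F = {}" and "s \<in> set p" and walk: "is_walk V E p"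
      and "last p \<in> M"
      unfolding failed_paths_def cap_paths_def by auto
    then obtain ys zs where p_split: "p = ys @ s # zs"
      by (meson split_list)
    have "is_walk (V - F) E (s # zs)"
      using walk avoid unfolding p_split is_walk_Diff_iff is_walk_def
      by (auto simp: successively_append_iff)
    moreover have "last (s # zs) \<in> M"
      using \<open>last p \<in> M\<close> p_split by simp
    ultimately show False
      using assms by (metis list.sel(1))
  qed
qed (auto simp: failed_paths_def)

lemma failed_paths_distinct_if_walk:
  assumes sym: "\<And>u v. E u v \<Longrightarrow> E v u"
    and walk: "is_walk V E q" and "last q \<in> M"
    and avoid: "set q \<inter> (F1 \<inter> F2) = {}" and meet: "set q \<inter> (F1 \<union> F2) \<noteq> {}"
  shows "failed_paths (cap_paths V E M) F1 \<noteq> failed_paths (cap_paths V E M) F2"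
proof -
  obtain ys x zs where q_split: "q = ys @ x # zs"
    and x: "x \<in> F1 \<union> F2" and zs: "\<forall>y\<in>set zs. y \<notin> F1 \<union> F2"
    using split_list_last_prop[of q "\<lambda>y. y \<in> F1 \<union> F2"] meet by blast
  define c where "c = rev zs @ x # zs"
  have "successively E (x # zs)"
    using walk unfolding q_split is_walk_def by (simp add: successively_append_iff)
  then have "successively E c"
    unfolding c_def using successively_rev_append[of E x zs] sym by blast
  moreover have "set c \<subseteq> V"
    using walk unfolding c_def q_split is_walk_def by auto
  moreover have "hd c = last q" "last c = last q"
    unfolding c_def q_split by (simp_all add: hd_append hd_rev)
  moreover have "c \<noteq> []"
    unfolding c_def by simp
  ultimately have c_cap: "c \<in> cap_paths V E M"
    using \<open>last q \<in> M\<close> unfolding cap_paths_def is_walk_def by simp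
  have c_meets: "set c \<inter> F \<noteq> {} \<longleftrightarrow> x \<in> F" if "F \<subseteq> F1 \<union> F2" for F
    using zs that unfolding c_def by auto
  have "x \<notin> F1 \<inter> F2"
    using avoid unfolding q_split by auto
  then have "(c \<in> failed_paths (cap_paths V E M) F1) \<noteq> (c \<in> failed_paths (cap_paths V E M) F2)"
    using x c_cap c_meets[of F1] c_meets[of F2] unfolding failed_paths_def by auto
  then show ?thesis
    by metis
qed

lemma monitor_reachable_if_k_identifiable:
  assumes "k_identifiable V E M S k" and "finite V" and "S \<subseteq> V - M" and "k \<ge> 1"
    and V': "V' \<subseteq> V - M" "card V' \<le> k - 1" and s: "s \<in> S - V'"
  shows "\<exists>p. is_walk (V - V') E p \<and> hd p = s \<and> last p \<in> M"
proof (rule ccontr)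
  assume cut: "\<not> (\<exists>p. is_walk (V - V') E p \<and> hd p = s \<and> last p \<in> M)"
  have "finite V'"
    using V'(1) \<open>finite V\<close> finite_subset by blast
  then have "card (insert s V') \<le> k" "card V' \<le> k"
    using V'(2) s \<open>k \<ge> 1\<close> by auto
  moreover have "insert s V' \<inter> S \<noteq> V' \<inter> S" "insert s V' \<subseteq> V - M"
    using V'(1) s \<open>S \<subseteq> V - M\<close> by auto
  ultimately have
    "failed_paths (cap_paths V E M) (insert s V') \<noteq> failed_paths (cap_paths V E M) V'"
    using assms(1)[unfolded k_identifiable_def, rule_format, of "insert s V'" V'] V'(1) by blast
  with failed_paths_insert_unreachable[OF cut] show False
    by simp
qed

lemma k_identifiable_if_monitor_reachable:
  assumes sym: "\<And>u v. E u v \<Longrightarrow> E v u" and "finite V"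
    and reach: "\<forall>V'. V' \<subseteq> V - M \<and> card V' \<le> k - 1 \<longrightarrow>
       (\<forall>s\<in>S - V'. \<exists>p. is_walk (V - V') E p \<and> hd p = s \<and> last p \<in> M)"
  shows "k_identifiable V E M S k"
  unfolding k_identifiable_def
proof (intro allI impI; elim conjE)
  fix F1 F2
  assume F: "F1 \<subseteq> V - M" "F2 \<subseteq> V - M" "card F1 \<le> k" "card F2 \<le> k"
    and "F1 \<inter> S \<noteq> F2 \<inter> S"
  then obtain s where s: "s \<in> S" "s \<in> F1 \<union> F2" "s \<notin> F1 \<inter> F2"
    by blast
  have "finite F1" "finite F2"
    using F(1,2) \<open>finite V\<close> finite_subset by blast+
  moreover have "F1 \<inter> F2 \<subset> F1 \<or> F1 \<inter> F2 \<subset> F2"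
    using s by blast
  ultimately have "card (F1 \<inter> F2) < card F1 \<or> card (F1 \<inter> F2) < card F2"
    using psubset_card_mono by blast
  then have "card (F1 \<inter> F2) \<le> k - 1"
    using F(3,4) by linarith
  moreover have "F1 \<inter> F2 \<subseteq> V - M" "s \<in> S - F1 \<inter> F2"
    using F(1) s by auto
  ultimately obtain q where
    "is_walk (V - F1 \<inter> F2) E q" "hd q = s" "last q \<in> M"
    using reach by blast
  then have "is_walk V E q" "set q \<inter> (F1 \<inter> F2) = {}" "s \<in> set q"
    unfolding is_walk_Diff_iff is_walk_def by auto
  with \<open>last q \<in> M\<close> s(2) show
    "failed_paths (cap_paths V E M) F1 \<noteq> failed_paths (cap_paths V E M) F2"
    by (intro failed_paths_distinct_if_walk[OF sym]) auto
qed

theorem lemma3: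
  fixes V :: "'a set" and E :: "'a \<Rightarrow> 'a \<Rightarrow> bool" and M S :: "'a set" and k :: nat
  assumes "undirected_graph V E" and "connected_graph V E"
    and "M \<subseteq> V" and "S \<subseteq> V - M" and "k \<ge> 1"
  shows "k_identifiable V E M S k \<longleftrightarrow>
    (\<forall>V'. V' \<subseteq> V - M \<and> card V' \<le> k - 1 \<longrightarrow>
       (\<forall>s\<in>S - V'. \<exists>p. is_walk (V - V') E p \<and> hd p = s \<and> last p \<in> M))"
proof -
  have "finite V" and sym: "\<And>u v. E u v \<Longrightarrow> E v u"
    using assms(1) unfolding undirected_graph_def by auto
  show ?thesis
  proof
    assume "k_identifiable V E M S k"
    then show "\<forall>V'. V' \<subseteq> V - M \<and> card V' \<le> k - 1 \<longrightarrow>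
       (\<forall>s\<in>S - V'. \<exists>p. is_walk (V - V') E p \<and> hd p = s \<and> last p \<in> M)"
      using monitor_reachable_if_k_identifiable[OF _ \<open>finite V\<close> assms(4,5)]
      by (intro allI impI ballI) auto
  qed (rule k_identifiable_if_monitor_reachable[OF sym \<open>finite V\<close>])
qed

end
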